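(* Let $d$ be the discriminant of a real quadratic field, $p$ an odd prime not dividing $d$, and $p'$ an integer with $pp'\equiv1\pmod d$. For $1\le i\le p-1$ let $\beta_p(i)=\sum_{0<j<d\{p'i/d\}}(\frac dj)$. Then $$\sum_{i=1}^{p-1}\frac{\beta_p(i)}i\equiv-\frac1d\Big(\frac dp\Big)\sum_{c=1}^{d-1}\Big(\frac dc\Big)\Big(B_{p-1}\Big(\frac cd\Big)-B_{p-1}\Big)\pmod p.$$
   Context: $(\frac d{\cdot})$ is the Kronecker symbol; $\{x\}$ is the fractional part of $x$; $B_n(x)$ is the $n$th Bernoulli polynomial and $B_n=B_n(0)$. Congruences modulo $p$ are between rational numbers whose denominators are prime to $p$. *)

theory Defs
  imports "HOL-Number_Theory.Number_Theory" "HOL-Computational_Algebra.Squarefree"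
begin

(* Bernoulli numbers, convention B_1 = -1/2:  sum_{k<=n} C(n+1,k) B_k = 0 for n >= 1 *)
fun bernoulli :: "nat \<Rightarrow> rat" where
  "bernoulli n = (if n = 0 then 1
     else - (\<Sum>k<n. of_nat (Suc n choose k) * bernoulli k) / of_nat (Suc n))"

definition bernpoly :: "nat \<Rightarrow> rat \<Rightarrow> rat" where
  "bernpoly n x = (\<Sum>k\<le>n. of_nat (n choose k) * bernoulli k * x ^ (n - k))"

definition kron_prime :: "int \<Rightarrow> nat \<Rightarrow> int" where
  "kron_prime a q = (if q = 2 then (if even a then 0 else if a mod 8 = 1 \<or> a mod 8 = 7 then 1 else -1)
                     else Legendre a (int q))"

definition kronecker :: "int \<Rightarrow> int \<Rightarrow> int" where
  "kronecker a n = (if n = 0 then (if \<bar>a\<bar> = 1 then 1 else 0)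
     else (if n < 0 \<and> a < 0 then -1 else 1) *
       (\<Prod>q\<in>prime_factors (nat \<bar>n\<bar>). kron_prime a q ^ multiplicity q (nat \<bar>n\<bar>)))"

definition fundamental_discriminant :: "int \<Rightarrow> bool" where
  "fundamental_discriminant d \<longleftrightarrow> d \<noteq> 1 \<and>
     ((d mod 4 = 1 \<and> squarefree d) \<or>
      (\<exists>m. d = 4 * m \<and> (m mod 4 = 2 \<or> m mod 4 = 3) \<and> squarefree m))"

definition real_quadratic_disc :: "int \<Rightarrow> bool" where
  "real_quadratic_disc d \<longleftrightarrow> fundamental_discriminant d \<and> d > 0"

definition rat_cong :: "rat \<Rightarrow> rat \<Rightarrow> int \<Rightarrow> bool" where
  "rat_cong x y p \<longleftrightarrow> coprime (snd (quotient_of x)) p \<and> coprime (snd (quotient_of y)) p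
      \<and> p dvd fst (quotient_of (x - y))"

end

theory Submission
  imports Defs
begin

text \<open>
  Write \<open>\<chi> = (d/\<cdot>)\<close>, \<open>n = p - 1\<close> and \<open>h(t) = B\<^sub>n(t/d) - B\<^sub>n\<close>, which is \<open>p\<close>-integral.
  By Fermat, \<open>1/i \<equiv> i\<^sup>p\<^sup>-\<^sup>2\<close>, so the left-hand side is congruent to
  \<open>Y = \<Sum>k<p. \<beta>(k) k\<^sup>p\<^sup>-\<^sup>2\<close>. Since \<open>B\<^sub>n(x + 1) - B\<^sub>n(x) = n x\<^sup>n\<^sup>-\<^sup>1\<close>, we get
  \<open>n Y = d\<^sup>p\<^sup>-\<^sup>2 \<Sum>k<p. \<beta>(k) (h(k + d) - h(k))\<close>, and because \<open>\<beta>\<close> has period \<open>d\<close> this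
  telescopes to \<open>d\<^sup>p\<^sup>-\<^sup>2 \<Sum>t<d. (\<beta>(t + p) h(t + p) - \<beta>(t) h(t))\<close>. Modulo \<open>p\<close> we have
  \<open>h(t + p) \<equiv> h(t)\<close>, \<open>n \<equiv> -1\<close>, \<open>d\<^sup>p\<^sup>-\<^sup>2 \<equiv> 1/d\<close>, and exactly
  \<open>\<beta>(t + p) - \<beta>(t) = \<chi>(p) \<chi>(t)\<close>, because \<open>p' t + p' p \<equiv> p' t + 1\<close> and the values of \<open>\<chi>\<close>
  sum to zero over a period.

  All that is used about \<open>\<chi>\<close> is that it is a non-principal real character modulo \<open>d\<close>. For a
  fundamental discriminant \<open>d = e M\<close> with \<open>M\<close> odd and squarefree and \<open>e \<in> {1, 4, 8}\<close>, quadratic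
  reciprocity and its supplements show that on primes \<open>(d/\<cdot>)\<close> agrees with the product of a
  character modulo \<open>e\<close> and the Jacobi symbol \<open>(\<cdot>/M)\<close>.
\<close>

section \<open>Congruences modulo a prime between rationals\<close>

definition p_integral :: "int \<Rightarrow> rat \<Rightarrow> bool" where
  "p_integral p x \<longleftrightarrow> (\<exists>a b. \<not> p dvd b \<and> x = of_int a / of_int b)"

locale prime_modulus =
  fixes p :: int
  assumes prime: "prime p"
begin

lemma p_integral_frac: "\<not> p dvd b \<Longrightarrow> p_integral p (of_int a / of_int b)"
  unfolding p_integral_def by blast

lemma p_integral_of_int [simp]: "p_integral p (of_int a)"
  using p_integral_frac[of 1 a] prime by (simp add: prime_int_iff)

lemma p_integral_of_nat [simp]: "p_integral p (of_nat n)"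
  using p_integral_of_int[of "int n"] by simp

lemma p_nonzero [simp]: "p \<noteq> 0"
  using prime by auto

lemma p_integral_0 [simp]: "p_integral p 0" and p_integral_1 [simp]: "p_integral p 1"
  using p_integral_of_int[of 0] p_integral_of_int[of 1] by simp_all

lemma p_integral_obtain:
  assumes "p_integral p x"
  obtains a b where "b \<noteq> 0" "\<not> p dvd b" "x = of_int a / of_int b"
  using assms unfolding p_integral_def by (metis dvd_0_right)

lemma p_integral_add [intro]:
  assumes "p_integral p x" "p_integral p y" shows "p_integral p (x + y)"
proof -
  obtain a b c e where "b \<noteq> 0" "\<not> p dvd b" "x = of_int a / of_int b"
    and "e \<noteq> 0" "\<not> p dvd e" "y = of_int c / of_int e"
    using assms by (metis p_integral_obtain)
  moreover from this have "\<not> p dvd b * e"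
    using prime by (simp add: prime_dvd_mult_iff)
  moreover from calculation have "x + y = of_int (a * e + c * b) / of_int (b * e)"
    by (simp add: field_simps)
  ultimately show ?thesis
    by (metis p_integral_frac)
qed

lemma p_integral_mult [intro]:
  assumes "p_integral p x" "p_integral p y" shows "p_integral p (x * y)"
proof -
  obtain a b c e where "b \<noteq> 0" "\<not> p dvd b" "x = of_int a / of_int b"
    and "e \<noteq> 0" "\<not> p dvd e" "y = of_int c / of_int e"
    using assms by (metis p_integral_obtain)
  moreover from this have "\<not> p dvd b * e"
    using prime by (simp add: prime_dvd_mult_iff)
  ultimately show ?thesis
    using p_integral_frac[of "b * e" "a * c"] by simp
qed

lemma p_integral_uminus [intro]: "p_integral p x \<Longrightarrow> p_integral p (- x)"
  using p_integral_mult[OF p_integral_of_int[of "-1"]] by simp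

lemma p_integral_diff [intro]: "p_integral p x \<Longrightarrow> p_integral p y \<Longrightarrow> p_integral p (x - y)"
  using p_integral_add[of x "- y"] by auto

lemma p_integral_sum [intro]: "(\<And>i. i \<in> A \<Longrightarrow> p_integral p (f i)) \<Longrightarrow> p_integral p (\<Sum>i\<in>A. f i)"
  by (induction A rule: infinite_finite_induct) auto

lemma p_integral_power [intro]: "p_integral p x \<Longrightarrow> p_integral p (x ^ n)"
  by (induction n) auto

lemma p_integral_iff_coprime_denom: "p_integral p x \<longleftrightarrow> coprime (snd (quotient_of x)) p"
proof -
  obtain a0 b0 where q: "quotient_of x = (a0, b0)" by force
  then have x: "x = of_int a0 / of_int b0" and "b0 > 0" and "coprime a0 b0"
    by (auto intro: quotient_of_div quotient_of_denom_pos quotient_of_coprime)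
  have "\<not> p dvd b0" if "p_integral p x"
  proof
    assume "p dvd b0"
    obtain a b where "b \<noteq> 0" "\<not> p dvd b" "x = of_int a / of_int b"
      using \<open>p_integral p x\<close> by (rule p_integral_obtain)
    with x \<open>b0 > 0\<close> have "a0 * b = a * b0"
      by (simp add: field_simps flip: of_int_mult of_int_eq_iff)
    with \<open>p dvd b0\<close> have "p dvd a0 * b" by simp
    with \<open>\<not> p dvd b\<close> have "p dvd a0" using prime by (simp add: prime_dvd_mult_iff)
    with \<open>p dvd b0\<close> \<open>coprime a0 b0\<close> show False
      using prime by (meson coprime_common_divisor not_prime_unit)
  qed
  moreover have "coprime b0 p \<longleftrightarrow> \<not> p dvd b0"
    using prime by (metis coprime_commute prime_imp_coprime coprime_absorb_right not_prime_unit)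
  ultimately show ?thesis
    using q x p_integral_frac by auto
qed

lemma rat_cong_iff:
  "rat_cong x y p \<longleftrightarrow> p_integral p x \<and> p_integral p y \<and> p_integral p ((x - y) / of_int p)"
proof -
  obtain a0 b0 where q: "quotient_of (x - y) = (a0, b0)" by force
  then have xy: "x - y = of_int a0 / of_int b0" and "b0 > 0"
    by (auto intro: quotient_of_div quotient_of_denom_pos)
  have "p dvd a0 \<longleftrightarrow> p_integral p ((x - y) / of_int p)"
    if "p_integral p x" "p_integral p y"
  proof
    assume "p dvd a0"
    then obtain k where "a0 = p * k" by blast
    moreover have "\<not> p dvd b0"
      using p_integral_diff[OF that] q prime
      by (simp add: p_integral_iff_coprime_denom) (metis coprime_common_divisor dvd_refl not_prime_unit)
    ultimately show "p_integral p ((x - y) / of_int p)"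
      using xy p_integral_frac[of b0 k] by simp
  next
    assume "p_integral p ((x - y) / of_int p)"
    then obtain a b where "b \<noteq> 0" "\<not> p dvd b" "(x - y) / of_int p = of_int a / of_int b"
      by (rule p_integral_obtain)
    with xy have "of_int a0 / of_int b0 = of_int p * (of_int a / of_int b :: rat)"
      by (metis nonzero_mult_div_cancel_left of_int_eq_0_iff p_nonzero times_divide_eq_right)
    with \<open>b0 > 0\<close> \<open>b \<noteq> 0\<close> have "of_int (a0 * b) = (of_int (p * a * b0) :: rat)"
      by (simp add: field_simps)
    then have "a0 * b = p * a * b0"
      by (simp only: of_int_eq_iff)
    then have "p dvd a0 * b" by (metis dvd_triv_left mult.assoc)
    with \<open>\<not> p dvd b\<close> show "p dvd a0" using prime by (simp add: prime_dvd_mult_iff)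
  qed
  then show ?thesis
    unfolding rat_cong_def p_integral_iff_coprime_denom[symmetric] q by auto
qed

lemma rat_cong_refl [intro]: "p_integral p x \<Longrightarrow> rat_cong x x p"
  by (simp add: rat_cong_iff)

lemma rat_cong_sym: "rat_cong x y p \<Longrightarrow> rat_cong y x p"
  unfolding rat_cong_iff by (metis minus_diff_eq minus_divide_left p_integral_uminus)

lemma rat_cong_trans [trans]: "rat_cong x y p \<Longrightarrow> rat_cong y z p \<Longrightarrow> rat_cong x z p"
  unfolding rat_cong_iff using p_integral_add[of "(x - y) / of_int p" "(y - z) / of_int p"]
  by (simp add: diff_divide_distrib)

lemma rat_cong_add: "rat_cong x y p \<Longrightarrow> rat_cong u v p \<Longrightarrow> rat_cong (x + u) (y + v) p"
  unfolding rat_cong_iff using p_integral_add[of "(x - y) / of_int p" "(u - v) / of_int p"]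
  by (auto simp: diff_divide_distrib add_divide_distrib algebra_simps)

lemma rat_cong_uminus: "rat_cong x y p \<Longrightarrow> rat_cong (- x) (- y) p"
  unfolding rat_cong_iff using p_integral_uminus[of "(x - y) / of_int p"]
  by (auto simp: diff_divide_distrib)

lemma rat_cong_diff: "rat_cong x y p \<Longrightarrow> rat_cong u v p \<Longrightarrow> rat_cong (x - u) (y - v) p"
  using rat_cong_add[OF _ rat_cong_uminus] by (metis diff_conv_add_uminus)

lemma rat_cong_mult: "rat_cong x y p \<Longrightarrow> rat_cong u v p \<Longrightarrow> rat_cong (x * u) (y * v) p"
proof -
  assume "rat_cong x y p" "rat_cong u v p"
  then have "p_integral p (x * u)" "p_integral p (y * v)"
    and "p_integral p (x * ((u - v) / of_int p) + (x - y) / of_int p * v)"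
    unfolding rat_cong_iff by blast+
  moreover have "(x * u - y * v) / of_int p = x * ((u - v) / of_int p) + (x - y) / of_int p * v"
    by (simp add: field_simps)
  ultimately show ?thesis
    unfolding rat_cong_iff by simp
qed

lemma rat_cong_sum:
  "(\<And>i. i \<in> A \<Longrightarrow> rat_cong (f i) (g i) p) \<Longrightarrow> rat_cong (\<Sum>i\<in>A. f i) (\<Sum>i\<in>A. g i) p"
  by (induction A rule: infinite_finite_induct) (auto intro: rat_cong_add)

lemma rat_cong_power: "rat_cong x y p \<Longrightarrow> rat_cong (x ^ n) (y ^ n) p"
  by (induction n) (auto intro: rat_cong_mult)

lemma rat_cong_add_multiple: "p_integral p x \<Longrightarrow> p_integral p y \<Longrightarrow> rat_cong (x + of_int p * y) x p"
  by (auto simp: rat_cong_iff intro!: p_integral_add p_integral_mult)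

lemma rat_cong_inverse:
  assumes "\<not> p dvd a"
  shows "rat_cong (1 / of_int a) (of_int a ^ (nat p - 2)) p"
proof -
  have "coprime a p"
    using assms prime by (metis prime_imp_coprime coprime_commute)
  then have "[a ^ totient (nat p) = 1] (mod p)"
    using prime by (intro residues.euler_theorem) (auto simp: residues_def prime_gt_1_int)
  moreover have "totient (nat p) = Suc (nat p - 2)"
    using prime prime_ge_2_int[of p] by (simp add: totient_prime prime_nat_iff_prime)
  ultimately obtain k where k: "1 - a * a ^ (nat p - 2) = p * k"
    by (metis cong_iff_dvd_diff cong_sym dvdE power_Suc)
  then have "1 - of_int a * of_int a ^ (nat p - 2) = (of_int p * of_int k :: rat)"
    by (metis of_int_1 of_int_diff of_int_mult of_int_power)
  moreover have "a \<noteq> 0" using assms by auto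
  ultimately have "1 / of_int a - of_int a ^ (nat p - 2) = (of_int p * of_int k) / (of_int a :: rat)"
    by (simp add: field_simps)
  then have "(1 / of_int a - of_int a ^ (nat p - 2)) / of_int p = (of_int k / of_int a :: rat)"
    by simp
  then show ?thesis
    using assms p_integral_frac[of a 1] by (simp add: rat_cong_iff p_integral_frac p_integral_power)
qed

end

section \<open>Bernoulli polynomials\<close>

declare bernoulli.simps [simp del]

lemma bernoulli_0 [simp]: "bernoulli 0 = 1"
  by (simp add: bernoulli.simps)

lemma sum_binomial_bernoulli:
  assumes "N \<ge> 1"
  shows "(\<Sum>k<N. of_nat (N choose k) * bernoulli k) = (if N = 1 then 1 else 0)"
proof (cases "N = 1")
  case False
  then obtain n where N: "N = Suc n" and "n \<ge> 1" using assms by (cases N) auto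
  then have "of_nat (Suc n) * bernoulli n = - (\<Sum>k<n. of_nat (Suc n choose k) * bernoulli k)"
    using bernoulli.simps[of n] by (simp del: of_nat_Suc)
  with False show ?thesis unfolding N by (simp del: of_nat_Suc)
qed simp

lemma sum_lessThan_triangle_swap:
  fixes f :: "nat \<Rightarrow> nat \<Rightarrow> 'a :: comm_monoid_add"
  shows "(\<Sum>k<n. \<Sum>j<n - k. f k j) = (\<Sum>j<n. \<Sum>k<n - j. f k j)"
proof -
  have "{j \<in> {..<n}. k + j < n} = {..<n - k}" "{k \<in> {..<n}. k + j < n} = {..<n - j}" for j k
    by auto
  then show ?thesis
    using sum.swap_restrict[of "{..<n}" "{..<n}" f "\<lambda>k j. k + j < n"] by simp
qed

lemma binomial_mult_swap:
  assumes "k + j \<le> n"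
  shows "(n choose k) * ((n - k) choose j) = (n choose j) * ((n - j) choose k)"
  using choose_mult[of k "k + j" n] choose_mult[of j "k + j" n] assms
    binomial_symmetric[of k "k + j"] by simp

lemma bernpoly_minus_bernoulli:
  "bernpoly n x - bernoulli n = (\<Sum>k<n. of_nat (n choose k) * bernoulli k * x ^ (n - k))"
  unfolding bernpoly_def by (simp add: lessThan_Suc_atMost[symmetric])

lemma bernpoly_plus_one:
  assumes "n \<ge> 1"
  shows "bernpoly n (x + 1) - bernpoly n x = of_nat n * x ^ (n - 1)"
proof -
  have binomial_diff: "(x + 1) ^ m - x ^ m = (\<Sum>j<m. of_nat (m choose j) * x ^ j)" for m
    using binomial_ring[of x 1 m] by (simp add: lessThan_Suc_atMost[symmetric])
  have "bernpoly n (x + 1) - bernpoly n x =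
        (\<Sum>k<n. of_nat (n choose k) * bernoulli k * ((x + 1) ^ (n - k) - x ^ (n - k)))"
    using bernpoly_minus_bernoulli[of n x] bernpoly_minus_bernoulli[of n "x + 1"]
    by (simp add: sum_subtractf[symmetric] algebra_simps)
  also have "\<dots> =
        (\<Sum>k<n. \<Sum>j<n - k. of_nat (n choose k) * bernoulli k * (of_nat ((n - k) choose j) * x ^ j))"
    by (simp add: binomial_diff sum_distrib_left)
  also have "\<dots> =
        (\<Sum>j<n. \<Sum>k<n - j. of_nat (n choose k) * bernoulli k * (of_nat ((n - k) choose j) * x ^ j))"
    by (rule sum_lessThan_triangle_swap)
  also have "\<dots> = (\<Sum>j<n. of_nat (n choose j) * x ^ j *
                        (\<Sum>k<n - j. of_nat ((n - j) choose k) * bernoulli k))"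
    unfolding sum_distrib_left
  proof (intro sum.cong refl)
    fix j k assume "j \<in> {..<n}" "k \<in> {..<n - j}"
    then have "(n choose k) * ((n - k) choose j) = (n choose j) * ((n - j) choose k)"
      by (intro binomial_mult_swap) simp
    then have "of_nat (n choose k) * of_nat ((n - k) choose j) =
               (of_nat (n choose j) * of_nat ((n - j) choose k) :: rat)"
      by (metis of_nat_mult)
    then show "of_nat (n choose k) * bernoulli k * (of_nat ((n - k) choose j) * x ^ j) =
               of_nat (n choose j) * x ^ j * (of_nat ((n - j) choose k) * bernoulli k)"
      by (metis (no_types, lifting) mult.assoc mult.commute)
  qed
  also have "\<dots> = (\<Sum>j<n. of_nat (n choose j) * x ^ j * (if j = n - 1 then 1 else 0))"
    by (intro sum.cong refl) (auto simp: sum_binomial_bernoulli)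
  also have "\<dots> = of_nat n * x ^ (n - 1)"
    using assms by (cases n) auto
  finally show ?thesis .
qed

context prime_modulus
begin

lemma p_integral_bernoulli: "int k + 1 < p \<Longrightarrow> p_integral p (bernoulli k)"
proof (induction k rule: less_induct)
  case (less k)
  show ?case
  proof (cases "k = 0")
    case False
    then have "bernoulli k =
        - (\<Sum>j<k. of_nat (Suc k choose j) * bernoulli j) * (of_int 1 / of_int (int k + 1))"
      using bernoulli.simps[of k] by (simp add: divide_inverse)
    moreover have "\<not> p dvd int k + 1"
      using less.prems zdvd_imp_le by fastforce
    moreover have "p_integral p (\<Sum>j<k. of_nat (Suc k choose j) * bernoulli j)"
      using less by (intro p_integral_sum p_integral_mult) auto
    ultimately show ?thesis
      by (metis p_integral_frac p_integral_mult p_integral_uminus)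
  qed simp
qed

lemma p_integral_bernpoly_minus_bernoulli:
  "int n < p \<Longrightarrow> p_integral p x \<Longrightarrow> p_integral p (bernpoly n x - bernoulli n)"
  unfolding bernpoly_minus_bernoulli
  by (intro p_integral_sum p_integral_mult p_integral_power p_integral_bernoulli) auto

lemma rat_cong_bernpoly_minus_bernoulli:
  assumes "int n < p" "p_integral p x" "p_integral p y"
  shows "rat_cong (bernpoly n (x + of_int p * y) - bernoulli n) (bernpoly n x - bernoulli n) p"
  unfolding bernpoly_minus_bernoulli
proof (intro rat_cong_sum rat_cong_mult rat_cong_power)
  show "rat_cong (x + of_int p * y) x p"
    using assms by (intro rat_cong_add_multiple)
qed (use assms in \<open>auto intro!: p_integral_bernoulli\<close>)

end

section \<open>The congruence for a real character\<close>

locale real_character =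
  fixes d :: int and \<chi> :: "int \<Rightarrow> int"
  assumes modulus_gt_1: "d > 1"
    and mult: "\<chi> (a * b) = \<chi> a * \<chi> b"
    and one: "\<chi> 1 = 1"
    and mod_modulus: "\<chi> (a mod d) = \<chi> a"
    and nonprincipal: "\<exists>a. coprime a d \<and> \<chi> a = -1"
begin

lemma zero [simp]: "\<chi> 0 = 0"
proof -
  obtain a where "\<chi> a = -1" using nonprincipal by blast
  then show ?thesis using mult[of a 0] by simp
qed

lemma cong_eq: "[a = b] (mod d) \<Longrightarrow> \<chi> a = \<chi> b"
  by (metis cong_def mod_modulus)

lemma sum_period_eq_0: "(\<Sum>j\<in>{0<..<d}. \<chi> j) = 0"
proof -
  obtain a where a: "coprime a d" "\<chi> a = -1" using nonprincipal by blast
  define f where "f j = (a * j) mod d" for j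
  have "inj_on f {0..<d}"
  proof (rule inj_onI)
    fix i j assume "i \<in> {0..<d}" "j \<in> {0..<d}" "f i = f j"
    then show "i = j"
      using a(1) cong_mult_lcancel unfolding f_def cong_def by fastforce
  qed
  moreover have "f ` {0..<d} \<subseteq> {0..<d}"
    unfolding f_def using modulus_gt_1 by auto
  ultimately have "f ` {0..<d} = {0..<d}"
    by (simp add: card_image card_subset_eq)
  then have "(\<Sum>j\<in>{0..<d}. \<chi> j) = (\<Sum>j\<in>{0..<d}. \<chi> (f j))"
    using sum.reindex[OF \<open>inj_on f {0..<d}\<close>, of \<chi>] by simp
  also have "\<dots> = - (\<Sum>j\<in>{0..<d}. \<chi> j)"
    unfolding f_def by (simp add: mod_modulus mult a(2) sum_negf)
  finally have "(\<Sum>j\<in>{0..<d}. \<chi> j) = 0" by simp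
  moreover have "{0..<d} = insert 0 {0<..<d}"
    using modulus_gt_1 by auto
  ultimately show ?thesis by simp
qed

end

lemma sum_periodic_telescope:
  fixes f h :: "int \<Rightarrow> 'a :: comm_ring"
  assumes periodic: "\<And>i. f (i + int D) = f i"
  shows "(\<Sum>k<P. f (int k) * (h (int k + int D) - h (int k))) =
         (\<Sum>t<D. f (int t + int P) * h (int t + int P)) - (\<Sum>t<D. f (int t) * h (int t))"
proof (induction P)
  case (Suc P)
  define g where "g t = f (int t + int P) * h (int t + int P)" for t
  have "(\<Sum>t<D. f (int t + int (Suc P)) * h (int t + int (Suc P))) = (\<Sum>t<D. g (Suc t))"
    unfolding g_def by (intro sum.cong refl) (simp add: algebra_simps)
  also have "\<dots> = (\<Sum>t<D. g t) + (g D - g 0)"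
    by (simp add: sum_lessThan_telescope[symmetric] sum_subtractf)
  also have "g D - g 0 = f (int P) * (h (int P + int D) - h (int P))"
    unfolding g_def using periodic[of "int P"] by (simp add: algebra_simps)
  finally show ?case
    using Suc by (simp add: g_def algebra_simps)
qed simp

context real_character
begin

definition partial_sum :: "int \<Rightarrow> int" where
  "partial_sum a = (\<Sum>j\<in>{0<..<a}. \<chi> j)"

lemma partial_sum_plus_1: "a \<ge> 0 \<Longrightarrow> partial_sum (a + 1) = partial_sum a + \<chi> a"
proof (cases "a = 0")
  case True
  then have "{0<..<a + 1} = {}" "{0<..<a} = {}" by auto
  with True show ?thesis unfolding partial_sum_def by simp
next
  case False
  assume "a \<ge> 0"
  with False have "{0<..<a + 1} = insert a {0<..<a}" by auto
  then show ?thesis unfolding partial_sum_def by simp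
qed

lemma partial_sum_0 [simp]: "partial_sum 0 = 0"
proof -
  have "{0<..<(0::int)} = {}" by auto
  then show ?thesis unfolding partial_sum_def by simp
qed

lemma partial_sum_modulus: "partial_sum d = 0"
  unfolding partial_sum_def by (rule sum_period_eq_0)

end

locale character_prime_setting = real_character d \<chi> + prime_modulus p
  for d \<chi> p +
  fixes p' :: int
  assumes odd_p: "odd p" and p_not_dvd_d: "\<not> p dvd d"
    and inverse: "[p * p' = 1] (mod d)"
begin

definition beta :: "int \<Rightarrow> int" where
  "beta i = partial_sum ((p' * i) mod d)"

text \<open>\<open>B\<^sub>p\<^sub>-\<^sub>1\<close> itself has \<open>p\<close> in its denominator (von Staudt--Clausen); the difference is \<open>p\<close>-integral.\<close>

definition bernoulli_term :: "int \<Rightarrow> rat" where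
  "bernoulli_term t = bernpoly (nat (p - 1)) (of_int t / of_int d) - bernoulli (nat (p - 1))"

lemma p_ge_3: "p \<ge> 3"
  using prime_ge_2_int[OF prime] odd_p by presburger

lemma char_inverse: "\<chi> p' = \<chi> p"
proof -
  have "\<chi> p * \<chi> p' = 1"
    using cong_eq[OF inverse] by (simp add: mult one)
  then show ?thesis
    using zmult_eq_1_iff by auto
qed

lemma beta_periodic: "beta (i + d) = beta i"
  unfolding beta_def by (simp add: algebra_simps)

lemma beta_plus_p:
  assumes "t \<ge> 0"
  shows "beta (t + p) = beta t + \<chi> p * \<chi> t"
proof -
  define a where "a = (p' * t) mod d"
  have a: "0 \<le> a" "a < d"
    using modulus_gt_1 unfolding a_def by auto
  have "[p' * t = a] (mod d)"
    unfolding a_def cong_def by simp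
  from cong_add[OF this inverse] have "[p' * (t + p) = a + 1] (mod d)"
    by (simp add: algebra_simps)
  then have "beta (t + p) = partial_sum ((a + 1) mod d)"
    unfolding beta_def cong_def by simp
  also have "\<dots> = partial_sum (a + 1)"
    using a partial_sum_modulus by (cases "a + 1 = d") simp_all
  also have "\<dots> = beta t + \<chi> a"
    using partial_sum_plus_1[OF a(1)] unfolding beta_def a_def by simp
  also have "\<chi> a = \<chi> p * \<chi> t"
    unfolding a_def by (simp add: mod_modulus mult char_inverse)
  finally show ?thesis .
qed

lemma p_integral_bernoulli_term: "p_integral p (bernoulli_term t)"
  unfolding bernoulli_term_def
  using p_not_dvd_d p_ge_3 by (intro p_integral_bernpoly_minus_bernoulli p_integral_frac) auto

lemma bernoulli_term_plus_p: "rat_cong (bernoulli_term (t + p)) (bernoulli_term t) p"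
proof -
  have "of_int (t + p) / of_int d = of_int t / of_int d + of_int p * (of_int 1 / (of_int d :: rat))"
    by (simp add: add_divide_distrib)
  then show ?thesis
    unfolding bernoulli_term_def
    using p_not_dvd_d p_ge_3 by (simp only:) (intro rat_cong_bernpoly_minus_bernoulli p_integral_frac; simp)
qed

lemma bernoulli_term_plus_d:
  "of_nat (nat (p - 1)) * (of_int t / of_int d) ^ (nat p - 2) = bernoulli_term (t + d) - bernoulli_term t"
proof -
  have "of_int (t + d) / of_int d = of_int t / of_int d + (1 :: rat)"
    using modulus_gt_1 by (simp add: field_simps)
  moreover have "nat (p - 1) - 1 = nat p - 2" "nat (p - 1) \<ge> 1"
    using p_ge_3 by auto
  ultimately show ?thesis
    unfolding bernoulli_term_def using bernpoly_plus_one[of "nat (p - 1)"] by simp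
qed

lemma sum_beta_div_cong_power_sum:
  "rat_cong (\<Sum>i=1..p-1. of_int (beta i) / of_int i)
            (\<Sum>k<nat p. of_int (beta (int k)) * of_nat k ^ (nat p - 2)) p"
proof -
  have "rat_cong (\<Sum>i=1..p-1. of_int (beta i) / of_int i)
                 (\<Sum>i=1..p-1. of_int (beta i) * of_int i ^ (nat p - 2)) p"
  proof (rule rat_cong_sum)
    fix i assume "i \<in> {1..p-1}"
    then have "\<not> p dvd i" by (auto simp: zdvd_not_zless)
    then show "rat_cong (of_int (beta i) / of_int i) (of_int (beta i) * of_int i ^ (nat p - 2)) p"
      using rat_cong_mult[OF rat_cong_refl rat_cong_inverse] by (simp add: divide_inverse)
  qed
  also have "(\<Sum>i=1..p-1. of_int (beta i) * of_int i ^ (nat p - 2)) =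
             (\<Sum>i\<in>int ` {0..<nat p}. of_int (beta i) * (of_int i :: rat) ^ (nat p - 2))"
  proof -
    have "int ` {0..<nat p} = insert 0 {1..p-1}"
      using p_ge_3 by (auto simp: image_int_atLeastLessThan)
    moreover have "nat p - 2 \<noteq> 0"
      using p_ge_3 by simp
    ultimately show ?thesis by simp
  qed
  also have "\<dots> = (\<Sum>k<nat p. of_int (beta (int k)) * of_nat k ^ (nat p - 2))"
    by (simp add: sum.reindex lessThan_atLeast0)
  finally show ?thesis .
qed

lemma power_sum_telescoped:
  "of_nat (nat (p - 1)) * (\<Sum>k<nat p. of_int (beta (int k)) * of_nat k ^ (nat p - 2)) =
     of_int d ^ (nat p - 2) *
       ((\<Sum>t<nat d. of_int (beta (int t + p)) * bernoulli_term (int t + p)) -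
        (\<Sum>t<nat d. of_int (beta (int t)) * bernoulli_term (int t)))"
proof -
  have d: "int (nat d) = d" and p: "int (nat p) = p"
    using modulus_gt_1 p_ge_3 by simp_all
  have "of_int d ^ (nat p - 2) \<noteq> (0 :: rat)"
    using modulus_gt_1 by simp
  then have step: "of_nat (nat (p - 1)) * of_nat k ^ (nat p - 2) =
      of_int d ^ (nat p - 2) * (bernoulli_term (int k + d) - bernoulli_term (int k))" for k
    using bernoulli_term_plus_d[of "int k"] by (simp add: power_divide field_simps)
  have "of_nat (nat (p - 1)) * (\<Sum>k<nat p. of_int (beta (int k)) * of_nat k ^ (nat p - 2)) =
          of_int d ^ (nat p - 2) *
            (\<Sum>k<nat p. of_int (beta (int k)) * (bernoulli_term (int k + int (nat d)) - bernoulli_term (int k)))"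
    unfolding sum_distrib_left d by (intro sum.cong refl) (metis step mult.left_commute)
  also have "(\<Sum>k<nat p. of_int (beta (int k)) * (bernoulli_term (int k + int (nat d)) - bernoulli_term (int k))) =
             (\<Sum>t<nat d. of_int (beta (int t + int (nat p))) * bernoulli_term (int t + int (nat p))) -
             (\<Sum>t<nat d. of_int (beta (int t)) * bernoulli_term (int t))"
    by (rule sum_periodic_telescope) (simp add: d beta_periodic)
  finally show ?thesis
    unfolding p .
qed

lemma telescoped_cong:
  "rat_cong ((\<Sum>t<nat d. of_int (beta (int t + p)) * bernoulli_term (int t + p)) -
             (\<Sum>t<nat d. of_int (beta (int t)) * bernoulli_term (int t)))
            (of_int (\<chi> p) * (\<Sum>t<nat d. of_int (\<chi> (int t)) * bernoulli_term (int t))) p"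
proof -
  have "rat_cong ((\<Sum>t<nat d. of_int (beta (int t + p)) * bernoulli_term (int t + p)) -
                  (\<Sum>t<nat d. of_int (beta (int t)) * bernoulli_term (int t)))
                 ((\<Sum>t<nat d. of_int (beta (int t + p)) * bernoulli_term (int t)) -
                  (\<Sum>t<nat d. of_int (beta (int t)) * bernoulli_term (int t))) p"
    using p_integral_bernoulli_term
    by (intro rat_cong_diff rat_cong_sum rat_cong_mult rat_cong_refl bernoulli_term_plus_p) auto
  also have "(\<Sum>t<nat d. of_int (beta (int t + p)) * bernoulli_term (int t)) -
             (\<Sum>t<nat d. of_int (beta (int t)) * bernoulli_term (int t)) =
             (\<Sum>t<nat d. of_int (beta (int t + p) - beta (int t)) * bernoulli_term (int t))"
    by (simp add: sum_subtractf algebra_simps)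
  also have "\<dots> = of_int (\<chi> p) * (\<Sum>t<nat d. of_int (\<chi> (int t)) * bernoulli_term (int t))"
    by (simp add: beta_plus_p sum_distrib_left mult.assoc)
  finally show ?thesis .
qed

theorem sum_beta_div_cong:
  "rat_cong (\<Sum>i=1..p-1. of_int (beta i) / of_int i)
     (- (1 / of_int d) * of_int (\<chi> p) * (\<Sum>c=1..d-1. of_int (\<chi> c) * bernoulli_term c)) p"
proof -
  define Y where "Y = (\<Sum>k<nat p. of_int (beta (int k)) * (of_nat k :: rat) ^ (nat p - 2))"
  define W where "W = (\<Sum>t<nat d. of_int (\<chi> (int t)) * bernoulli_term (int t))"
  have p_integral_Y: "p_integral p Y"
    unfolding Y_def by (intro p_integral_sum p_integral_mult p_integral_power) auto
  have "rat_cong (\<Sum>i=1..p-1. of_int (beta i) / of_int i) Y p"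
    unfolding Y_def by (rule sum_beta_div_cong_power_sum)
  also have "rat_cong Y (- (of_nat (nat (p - 1)) * Y)) p"
  proof -
    have "(Y - - (of_nat (nat (p - 1)) * Y)) / of_int p = Y"
      using p_ge_3 by (simp add: of_nat_diff field_simps)
    moreover have "p_integral p (- (of_nat (nat (p - 1)) * Y))"
      using p_integral_Y by (intro p_integral_uminus p_integral_mult) simp_all
    ultimately show ?thesis
      using p_integral_Y by (simp add: rat_cong_iff)
  qed
  also have "- (of_nat (nat (p - 1)) * Y) =
      - (of_int d ^ (nat p - 2) *
          ((\<Sum>t<nat d. of_int (beta (int t + p)) * bernoulli_term (int t + p)) -
           (\<Sum>t<nat d. of_int (beta (int t)) * bernoulli_term (int t))))"
    unfolding Y_def power_sum_telescoped ..
  also have "rat_cong \<dots> (- (1 / of_int d * (of_int (\<chi> p) * W))) p"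
    unfolding W_def using p_not_dvd_d
    by (intro rat_cong_uminus rat_cong_mult rat_cong_sym[OF rat_cong_inverse] telescoped_cong)
  also have "W = (\<Sum>c=1..d-1. of_int (\<chi> c) * bernoulli_term c)"
  proof -
    have "W = (\<Sum>c\<in>int ` {0..<nat d}. of_int (\<chi> c) * bernoulli_term c)"
      unfolding W_def by (simp add: sum.reindex lessThan_atLeast0)
    also have "int ` {0..<nat d} = insert 0 {1..d-1}"
      using modulus_gt_1 by (auto simp: image_int_atLeastLessThan)
    finally show ?thesis by simp
  qed
  finally show ?thesis by simp
qed

end

section \<open>Characters modulo 4 and 8, Legendre and Jacobi symbols\<close>

definition chi4 :: "int \<Rightarrow> int" where
  "chi4 n = (if n mod 4 = 1 then 1 else if n mod 4 = 3 then -1 else 0)"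

definition chi8 :: "int \<Rightarrow> int" where
  "chi8 n = (if n mod 8 \<in> {1, 7} then 1 else if n mod 8 \<in> {3, 5} then -1 else 0)"

lemma chi4_mod [simp]: "chi4 (n mod 4) = chi4 n"
  by (simp add: chi4_def)

lemma chi8_mod [simp]: "chi8 (n mod 8) = chi8 n"
  by (simp add: chi8_def)

lemma chi4_1 [simp]: "chi4 1 = 1" and chi8_1 [simp]: "chi8 1 = 1"
  by (simp_all add: chi4_def chi8_def)

lemma chi4_mult: "chi4 (a * b) = chi4 a * chi4 b"
proof -
  have "chi4 (r * s) = chi4 r * chi4 s" if "r \<in> {0..3}" "s \<in> {0..3}" for r s :: int
  proof -
    from that have "r = 0 \<or> r = 1 \<or> r = 2 \<or> r = 3" "s = 0 \<or> s = 1 \<or> s = 2 \<or> s = 3"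
      by auto
    then show ?thesis by (elim disjE) (simp_all add: chi4_def)
  qed
  moreover have "a mod 4 \<in> {0..3}" "b mod 4 \<in> {0..3}"
    by auto
  ultimately show ?thesis
    by (metis chi4_mod mod_mult_eq)
qed

lemma chi8_mult: "chi8 (a * b) = chi8 a * chi8 b"
proof -
  have "chi8 (r * s) = chi8 r * chi8 s" if "r \<in> {0..7}" "s \<in> {0..7}" for r s :: int
  proof -
    from that have "r = 0 \<or> r = 1 \<or> r = 2 \<or> r = 3 \<or> r = 4 \<or> r = 5 \<or> r = 6 \<or> r = 7"
      and "s = 0 \<or> s = 1 \<or> s = 2 \<or> s = 3 \<or> s = 4 \<or> s = 5 \<or> s = 6 \<or> s = 7"
      by auto
    then show ?thesis by (elim disjE) (simp_all add: chi8_def)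
  qed
  moreover have "a mod 8 \<in> {0..7}" "b mod 8 \<in> {0..7}"
    by auto
  ultimately show ?thesis
    by (metis chi8_mod mod_mult_eq)
qed

lemma chi4_odd: "odd n \<Longrightarrow> chi4 n = (if n mod 4 = 3 then -1 else 1)"
proof -
  assume "odd n"
  then have "n mod 4 = 1 \<or> n mod 4 = 3"
    by presburger
  then show ?thesis by (auto simp: chi4_def)
qed

lemma chi8_even: "even n \<Longrightarrow> chi8 n = 0"
proof -
  assume "even n"
  then have "n mod 8 = 0 \<or> n mod 8 = 2 \<or> n mod 8 = 4 \<or> n mod 8 = 6"
    by presburger
  then show ?thesis by (auto simp: chi8_def)
qed

lemma chi8_square: "odd n \<Longrightarrow> chi8 n * chi8 n = 1"
proof -
  assume "odd n"
  then have "n mod 8 = 1 \<or> n mod 8 = 3 \<or> n mod 8 = 5 \<or> n mod 8 = 7"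
    by presburger
  then show ?thesis by (auto simp: chi8_def)
qed

lemma Legendre_cong:
  assumes "[a = b] (mod m)"
  shows "Legendre a m = Legendre b m"
proof -
  have "[a = 0] (mod m) \<longleftrightarrow> [b = 0] (mod m)" "QuadRes m a \<longleftrightarrow> QuadRes m b"
    unfolding QuadRes_def using assms cong_sym cong_trans by blast+
  then show ?thesis unfolding Legendre_def by simp
qed

lemma Legendre_eq_0_iff: "Legendre a m = 0 \<longleftrightarrow> m dvd a"
  unfolding Legendre_def by (simp add: cong_0_iff)

lemma Legendre_cases: "Legendre a m = 0 \<or> Legendre a m = 1 \<or> Legendre a m = -1"
  unfolding Legendre_def by auto

lemma Legendre_1:
  assumes "m \<noteq> 1"
  shows "Legendre 1 (int m) = 1"
proof -
  have "QuadRes (int m) 1"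
    unfolding QuadRes_def by (rule exI[of _ 1]) simp
  with assms show ?thesis
    unfolding Legendre_def by (simp add: cong_0_iff)
qed

lemma even_half_minus_quarter_iff:
  fixes n :: int
  assumes "odd n"
  shows "even ((n - 1) div 2 - (n - 1) div 2 div 2) \<longleftrightarrow> n mod 8 \<in> {1, 7}"
proof -
  define k r where "k = n div 8" and "r = n mod 8"
  have "n = 8 * k + r" unfolding k_def r_def by simp
  moreover have "r = 1 \<or> r = 3 \<or> r = 5 \<or> r = 7" using assms unfolding r_def by presburger
  ultimately show ?thesis unfolding r_def[symmetric] by (elim disjE; simp; presburger)
qed

context
  fixes q :: nat
  assumes prime_q: "prime q" and q_gt_2: "q > 2"
begin

lemma Legendre_mult: "Legendre (a * b) (int q) = Legendre a (int q) * Legendre b (int q)"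
proof -
  define x where "x = Legendre (a * b) (int q) - Legendre a (int q) * Legendre b (int q)"
  have euler: "[Legendre y (int q) = y ^ ((q - 1) div 2)] (mod int q)" for y
    using euler_criterion prime_q q_gt_2 by blast
  have "[Legendre (a * b) (int q) = Legendre a (int q) * Legendre b (int q)] (mod int q)"
    using euler[of "a * b"] cong_mult[OF euler[of a] euler[of b]]
    by (metis cong_sym cong_trans power_mult_distrib)
  then have "int q dvd x"
    unfolding x_def by (simp add: cong_iff_dvd_diff)
  moreover have "\<bar>x\<bar> < int q"
    using Legendre_cases[of "a * b" "int q"] Legendre_cases[of a "int q"] Legendre_cases[of b "int q"]
      q_gt_2 unfolding x_def by auto
  ultimately have "x = 0"
    using dvd_imp_le_int[of x "int q"] by linarith
  then show ?thesis
    unfolding x_def by simp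
qed

lemma Legendre_2: "Legendre 2 (int q) = chi8 (int q)"
proof -
  interpret G: GAUSS q 2
    using prime_q q_gt_2 by unfold_locales (auto simp: cong_0_iff zdvd_not_zless)
  let ?h = "(int q - 1) div 2"
  have "G.E = (\<lambda>x. x * 2) ` {?h div 2 <.. ?h}"
  proof -
    have "x * 2 mod int q = x * 2" if "x \<in> G.A" for x
      using that q_gt_2 unfolding G.A_def by (auto intro!: mod_pos_pos_trivial)
    then show ?thesis
      unfolding G.E_def G.C_def G.B_def G.A_def by (auto simp: image_iff)
  qed
  then have "card G.E = nat (?h - ?h div 2)"
    by (simp add: card_image inj_on_def)
  moreover have "odd (int q)"
    using prime_q q_gt_2 prime_odd_nat by auto
  moreover from this have "even (?h - ?h div 2) \<longleftrightarrow> int q mod 8 \<in> {1, 7}"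
    by (rule even_half_minus_quarter_iff)
  ultimately have "even (card G.E) \<longleftrightarrow> int q mod 8 \<in> {1, 7}"
    by (simp add: even_nat_iff)
  moreover have "int q mod 8 = 1 \<or> int q mod 8 = 3 \<or> int q mod 8 = 5 \<or> int q mod 8 = 7"
    using \<open>odd (int q)\<close> by presburger
  ultimately show ?thesis
    using G.gauss_lemma unfolding chi8_def by auto
qed

lemma Legendre_4: "Legendre 4 (int q) = 1"
proof -
  have "odd (int q)"
    using prime_q q_gt_2 prime_odd_nat by auto
  then show ?thesis
    using Legendre_mult[of 2 2] Legendre_2 chi8_square[of "int q"] by simp
qed

lemma Legendre_8: "Legendre 8 (int q) = chi8 (int q)"
  using Legendre_mult[of 2 4] Legendre_2 Legendre_4 by simp

lemma exists_Legendre_eq_neg1: "\<exists>a. Legendre a (int q) = -1"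
proof -
  obtain g where "residue_primroot q g"
    using prime_primitive_root_exists[of q] prime_q prime_gt_1_nat by blast
  then have "coprime q g" and ord: "ord q g = q - 1"
    by (simp_all add: residue_primroot_def totient_prime[OF prime_q])
  let ?h = "(q - 1) div 2"
  have "\<not> [g ^ ?h = 1] (mod q)"
  proof
    assume "[g ^ ?h = 1] (mod q)"
    then have "q - 1 dvd ?h" using ord ord_divides by metis
    moreover have "0 < ?h" "?h < q - 1" using q_gt_2 by auto
    ultimately show False by (simp add: nat_dvd_not_less)
  qed
  then have "\<not> [int g ^ ?h = 1] (mod int q)"
    by (metis cong_int_iff of_nat_1 of_nat_power)
  moreover have "[Legendre (int g) (int q) = int g ^ ?h] (mod int q)"
    using euler_criterion prime_q q_gt_2 by blast
  moreover have "\<not> int q dvd int g"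
    using \<open>coprime q g\<close> prime_q by (metis coprime_absorb_left int_dvd_int_iff not_prime_unit)
  ultimately have "Legendre (int g) (int q) = -1"
    using Legendre_cases[of "int g" "int q"] Legendre_eq_0_iff by (metis cong_sym)
  then show ?thesis ..
qed

lemma Legendre_reciprocity:
  assumes "prime r" "r > 2" "q \<noteq> r"
  shows "Legendre (int r) (int q) =
           (if q mod 4 = 3 \<and> r mod 4 = 3 then -1 else 1) * Legendre (int q) (int r)"
proof -
  have "Legendre (int q) (int r) * Legendre (int r) (int q) =
          (-1::int) ^ ((q - 1) div 2 * ((r - 1) div 2))"
    using Quadratic_Reciprocity assms prime_q q_gt_2 by blast
  moreover have "(-1::int) ^ ((q - 1) div 2 * ((r - 1) div 2)) =
                   (if q mod 4 = 3 \<and> r mod 4 = 3 then -1 else 1)"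
  proof -
    have "odd q" "odd r" using assms prime_q q_gt_2 prime_odd_nat by auto
    then have "even ((q - 1) div 2 * ((r - 1) div 2)) \<longleftrightarrow> \<not> (q mod 4 = 3 \<and> r mod 4 = 3)"
      by (simp add: even_mult_iff) presburger
    then show ?thesis by (auto simp: neg_one_even_power neg_one_odd_power)
  qed
  moreover have "Legendre (int q) (int r) \<in> {1, -1}"
    using Legendre_cases[of "int q" "int r"] Legendre_eq_0_iff[of "int q" "int r"] assms
    by (metis insertCI int_dvd_int_iff prime_q primes_dvd_imp_eq)
  ultimately show ?thesis by auto
qed

end

definition odd_prime_set :: "nat set \<Rightarrow> bool" where
  "odd_prime_set P \<longleftrightarrow> finite P \<and> (\<forall>r\<in>P. prime r \<and> r > 2)"

definition jacobi :: "nat set \<Rightarrow> int \<Rightarrow> int" where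
  "jacobi P n = (\<Prod>r\<in>P. Legendre n (int r))"

lemma odd_prime_set_prime_factors:
  assumes "odd n"
  shows "odd_prime_set (prime_factors n)"
proof -
  have "r > 2" if "r \<in> prime_factors n" for r
  proof -
    from that have "prime r" "r dvd n" by auto
    with assms have "r \<noteq> 2" by auto
    with \<open>prime r\<close> show ?thesis using prime_ge_2_nat[of r] by linarith
  qed
  then show ?thesis unfolding odd_prime_set_def by auto
qed

context
  fixes P :: "nat set"
  assumes P: "odd_prime_set P"
begin

lemma jacobi_mult: "jacobi P (a * b) = jacobi P a * jacobi P b"
  unfolding jacobi_def prod.distrib[symmetric]
  using P unfolding odd_prime_set_def by (intro prod.cong refl Legendre_mult) auto

lemma jacobi_1 [simp]: "jacobi P 1 = 1"
  unfolding jacobi_def using P unfolding odd_prime_set_def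
  by (intro prod.neutral ballI Legendre_1) auto

lemma jacobi_cong:
  assumes "[a = b] (mod int (\<Prod>P))"
  shows "jacobi P a = jacobi P b"
  unfolding jacobi_def
proof (rule prod.cong[OF refl])
  fix r assume "r \<in> P"
  then have "int r dvd int (\<Prod>P)"
    using P unfolding odd_prime_set_def by (simp add: dvd_prodI)
  then show "Legendre a (int r) = Legendre b (int r)"
    using assms by (intro Legendre_cong) (rule cong_dvd_modulus)
qed

lemma jacobi_eq_0: "q \<in> P \<Longrightarrow> jacobi P (int q) = 0"
  using P unfolding jacobi_def odd_prime_set_def by (metis Legendre_eq_0_iff dvd_refl prod_zero)

lemma jacobi_2: "jacobi P 2 = chi8 (int (\<Prod>P))"
proof -
  have "jacobi P 2 = (\<Prod>r\<in>P. chi8 (int r))"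
    unfolding jacobi_def using P unfolding odd_prime_set_def by (intro prod.cong refl Legendre_2) auto
  also have "\<dots> = chi8 (\<Prod>r\<in>P. int r)"
    by (induction P rule: infinite_finite_induct) (simp_all add: chi8_mult)
  finally show ?thesis by simp
qed

end

lemma Legendre_prod_reciprocity:
  assumes "odd_prime_set P" "prime q" "q > 2" "q \<notin> P"
  shows "Legendre (int (\<Prod>P)) (int q) =
           (if q mod 4 = 3 then chi4 (int (\<Prod>P)) else 1) * jacobi P (int q)"
  using assms(1,4)
proof (induction P rule: infinite_finite_induct)
  case (insert r P)
  then have r: "prime r" "r > 2" "q \<noteq> r" and P: "odd_prime_set P" "q \<notin> P"
    unfolding odd_prime_set_def by auto
  have "Legendre (int (\<Prod>(insert r P))) (int q) =
          Legendre (int r) (int q) * Legendre (int (\<Prod>P)) (int q)"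
    using insert.hyps assms(2,3) by (simp add: Legendre_mult)
  also have "\<dots> = (if q mod 4 = 3 \<and> r mod 4 = 3 then -1 else 1) * Legendre (int q) (int r) *
                    ((if q mod 4 = 3 then chi4 (int (\<Prod>P)) else 1) * jacobi P (int q))"
    using Legendre_reciprocity[OF assms(2,3) r] insert.IH[OF P] by simp
  also have "\<dots> = (if q mod 4 = 3 then chi4 (int (\<Prod>(insert r P))) else 1) *
                    jacobi (insert r P) (int q)"
  proof -
    have "chi4 (int (\<Prod>(insert r P))) = chi4 (int r) * chi4 (int (\<Prod>P))"
      by (simp only: prod.insert[OF insert.hyps] of_nat_mult chi4_mult)
    moreover have "chi4 (int r) = (if r mod 4 = 3 then -1 else 1)"
    proof -
      have "int r mod 4 = int (r mod 4)"
        by (simp add: of_nat_mod)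
      then show ?thesis
        using chi4_odd[of "int r"] prime_odd_nat[OF r(1,2)] by auto
    qed
    moreover have "jacobi (insert r P) (int q) = Legendre (int q) (int r) * jacobi P (int q)"
      unfolding jacobi_def by (rule prod.insert[OF insert.hyps])
    ultimately show ?thesis by simp
  qed
  finally show ?case .
qed (use assms(2) in \<open>auto simp: jacobi_def odd_prime_set_def intro!: Legendre_1\<close>)

section \<open>The Kronecker symbol of a real quadratic field\<close>

lemma kronecker_eq_multiplicative:
  fixes \<psi> :: "int \<Rightarrow> int"
  assumes mult: "\<And>a b. \<psi> (a * b) = \<psi> a * \<psi> b" and one: "\<psi> 1 = 1"
    and primes: "\<And>q. prime q \<Longrightarrow> kron_prime d q = \<psi> (int q)"
    and "n > 0"
  shows "kronecker d n = \<psi> n"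
proof -
  have power: "\<psi> (x ^ k) = \<psi> x ^ k" for x k
    by (induction k) (simp_all add: mult one)
  have prod: "\<psi> (\<Prod>i\<in>S. g i) = (\<Prod>i\<in>S. \<psi> (g i))" for S and g :: "nat \<Rightarrow> int"
    by (induction S rule: infinite_finite_induct) (simp_all add: mult one)
  define N where "N = nat n"
  have "kronecker d n = (\<Prod>q\<in>prime_factors N. kron_prime d q ^ multiplicity q N)"
    unfolding kronecker_def N_def using \<open>n > 0\<close> by simp
  also have "\<dots> = (\<Prod>q\<in>prime_factors N. \<psi> (int q ^ multiplicity q N))"
    by (intro prod.cong refl) (simp add: primes power in_prime_factors_imp_prime)
  also have "\<dots> = \<psi> (\<Prod>q\<in>prime_factors N. int q ^ multiplicity q N)"
    by (simp add: prod)
  also have "(\<Prod>q\<in>prime_factors N. int q ^ multiplicity q N) = int (\<Prod>q\<in>prime_factors N. q ^ multiplicity q N)"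
    by simp
  also have "\<dots> = n"
    using prime_factorization_nat[of N] \<open>n > 0\<close> unfolding N_def by simp
  finally show ?thesis .
qed

lemma prime_coprime_prod_primes:
  assumes "prime (r :: nat)" "\<And>q. q \<in> Q \<Longrightarrow> prime q" "r \<notin> Q"
  shows "coprime r (\<Prod>Q)"
proof (cases "finite Q")
  case True
  have "\<not> r dvd \<Prod>Q"
  proof
    assume "r dvd \<Prod>Q"
    then obtain q where "q \<in> Q" "r dvd q"
      using True assms(1) prime_dvd_prod_iff[of Q r "\<lambda>x. x"] by auto
    with assms show False
      using primes_dvd_imp_eq by blast
  qed
  with assms(1) show ?thesis
    by (simp add: prime_imp_coprime)
qed simp

lemma exists_twisted_jacobi_eq_neg1:
  assumes P: "odd_prime_set P" "P \<noteq> {}" and coprime: "coprime e (int (\<Prod>P))"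
    and A_one: "A 1 = 1" and A_cong: "\<And>a b. [a = b] (mod e) \<Longrightarrow> A a = A b"
  shows "\<exists>a. coprime a (e * int (\<Prod>P)) \<and> A a * jacobi P a = -1"
proof -
  obtain r where r: "r \<in> P" using P(2) by blast
  with P(1) have fin: "finite P" and "prime r" "r > 2"
    unfolding odd_prime_set_def by auto
  obtain n where n: "Legendre n (int r) = -1"
    using exists_Legendre_eq_neg1[OF \<open>prime r\<close> \<open>r > 2\<close>] by blast
  define Q where "Q = P - {r}"
  have Q: "odd_prime_set Q"
    using P(1) unfolding Q_def odd_prime_set_def by auto
  have prod_P: "\<Prod>P = r * \<Prod>Q"
    using fin r unfolding Q_def by (simp add: prod.remove)
  have "coprime r (\<Prod>Q)"
    using P(1) \<open>prime r\<close> unfolding Q_def odd_prime_set_def by (intro prime_coprime_prod_primes) auto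
  then have "coprime (int r) (int (\<Prod>Q))"
    by (simp only: coprime_int_iff)
  moreover have "coprime (int r) e"
    using coprime unfolding prod_P by (simp add: coprime_commute)
  ultimately have "coprime (int r) (e * int (\<Prod>Q))"
    by simp
  \<comment> \<open>\<open>a\<close> is a non-residue modulo \<open>r\<close> but trivial for \<open>A\<close> and the remaining Legendre symbols.\<close>
  then obtain a where a_r: "[a = n] (mod int r)" and a_1: "[a = 1] (mod e * int (\<Prod>Q))"
    using binary_chinese_remainder_int[of "int r" "e * int (\<Prod>Q)" n 1] by blast
  have "A a = 1"
    using A_cong[OF cong_dvd_modulus[OF a_1]] A_one by simp
  moreover have "jacobi P a = Legendre a (int r) * jacobi Q a"
    using fin r unfolding jacobi_def Q_def by (simp add: prod.remove)
  moreover have "jacobi Q a = 1"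
    using jacobi_cong[OF Q cong_dvd_modulus[OF a_1]] jacobi_1[OF Q] by simp
  moreover have "Legendre a (int r) = -1"
    using Legendre_cong[OF a_r] n by simp
  moreover have "coprime a (e * int (\<Prod>P))"
  proof -
    have "\<not> int r dvd a"
      using \<open>Legendre a (int r) = -1\<close> Legendre_eq_0_iff[of a "int r"] by simp
    moreover have "prime (int r)"
      using \<open>prime r\<close> by simp
    ultimately have "coprime a (int r)"
      using prime_imp_coprime coprime_commute by blast
    moreover have "coprime a (e * int (\<Prod>Q))"
      using cong_imp_coprime[OF cong_sym[OF a_1]] by simp
    ultimately show ?thesis
      unfolding prod_P by (simp add: ac_simps)
  qed
  ultimately show ?thesis by auto
qed

lemma real_character_twisted_jacobi:
  assumes P: "odd_prime_set P" and modulus: "e * int (\<Prod>P) > 1"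
    and coprime: "coprime e (int (\<Prod>P))"
    and A_mult: "\<And>a b. A (a * b) = A a * A b" and A_one: "A 1 = 1"
    and A_cong: "\<And>a b. [a = b] (mod e) \<Longrightarrow> A a = A b"
    and nonprincipal: "P \<noteq> {} \<or> (\<exists>a. coprime a e \<and> A a = -1)"
  shows "real_character (e * int (\<Prod>P)) (\<lambda>n. A n * jacobi P n)"
proof
  show "A (a * b) * jacobi P (a * b) = A a * jacobi P a * (A b * jacobi P b)" for a b
    using A_mult jacobi_mult[OF P] by simp
  show "A 1 * jacobi P 1 = 1"
    using A_one jacobi_1[OF P] by simp
  show "A (a mod (e * int (\<Prod>P))) * jacobi P (a mod (e * int (\<Prod>P))) = A a * jacobi P a" for a
  proof -
    have "e dvd e * int (\<Prod>P)" "int (\<Prod>P) dvd e * int (\<Prod>P)"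
      by (rule dvd_triv_left, rule dvd_triv_right)
    then have "[a mod (e * int (\<Prod>P)) = a] (mod e)" "[a mod (e * int (\<Prod>P)) = a] (mod int (\<Prod>P))"
      unfolding cong_def by (simp_all add: mod_mod_cancel)
    then show ?thesis
      using A_cong jacobi_cong[OF P] by metis
  qed
  show "\<exists>a. coprime a (e * int (\<Prod>P)) \<and> A a * jacobi P a = -1"
  proof (cases "P = {}")
    case True
    then show ?thesis using nonprincipal by (simp add: jacobi_def)
  next
    case False
    then show ?thesis
      using exists_twisted_jacobi_eq_neg1 P coprime A_one A_cong by blast
  qed
qed (fact modulus)

lemma prod_prime_factors_squarefree:
  assumes "(n :: nat) > 0" "squarefree n"
  shows "\<Prod>(prime_factors n) = n"
proof -
  have "n = (\<Prod>p\<in>prime_factors n. p ^ multiplicity p n)"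
    using prime_factorization_nat assms(1) by blast
  also have "\<dots> = \<Prod>(prime_factors n)"
    using assms squarefree_factorial_semiring'[of n] by (intro prod.cong) auto
  finally show ?thesis by simp
qed

lemma squarefree_nat:
  assumes "squarefree (m :: int)" "m > 0"
  shows "squarefree (nat m)"
proof (rule squarefreeI)
  fix x :: nat assume "x\<^sup>2 dvd nat m"
  then have "int (x\<^sup>2) dvd int (nat m)"
    by (simp only: of_nat_dvd_iff)
  with assms(2) have "int x ^ 2 dvd m"
    by simp
  with assms(1) have "is_unit (int x)"
    by (rule squarefreeD)
  then show "is_unit x"
    by simp
qed

lemma odd_prime_set_squarefree:
  assumes "squarefree (m :: int)" "odd m" "m > 0"
  obtains P where "odd_prime_set P" "m = int (\<Prod>P)"
proof
  show "odd_prime_set (prime_factors (nat m))"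
    using assms by (intro odd_prime_set_prime_factors) (simp add: even_nat_iff)
  show "m = int (\<Prod>(prime_factors (nat m)))"
    using assms prod_prime_factors_squarefree[OF _ squarefree_nat[OF assms(1,3)]] by simp
qed

lemma real_quadratic_disc_odd_part:
  assumes "real_quadratic_disc d"
  obtains e m where "d = e * m" "m > 0" "odd m" "squarefree m"
    and "e = 1 \<and> m mod 4 = 1 \<or> e = 4 \<and> m mod 4 = 3 \<or> e = 8"
proof -
  have "d > 0" and
    "(d mod 4 = 1 \<and> squarefree d) \<or> (\<exists>m. d = 4 * m \<and> (m mod 4 = 2 \<or> m mod 4 = 3) \<and> squarefree m)"
    using assms unfolding real_quadratic_disc_def fundamental_discriminant_def by auto
  then show thesis
  proof (elim disjE exE conjE)
    assume "d mod 4 = 1" "squarefree d"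
    moreover from this have "odd d" by presburger
    ultimately show thesis
      using that[of 1 d] \<open>d > 0\<close> by simp
  next
    fix m assume "d = 4 * m" "m mod 4 = 3" "squarefree m"
    moreover from this \<open>d > 0\<close> have "odd m" "m > 0" by presburger+
    ultimately show thesis
      using that[of 4 m] by simp
  next
    fix m assume "d = 4 * m" "m mod 4 = 2" "squarefree m"
    moreover from this have "m = 2 * (m div 2)" "odd (m div 2)" by presburger+
    moreover from calculation have "squarefree (m div 2)"
      by (metis dvd_triv_right squarefree_mono)
    moreover from calculation \<open>d > 0\<close> have "m div 2 > 0" by linarith
    ultimately show thesis
      using that[of 8 "m div 2"] by simp
  qed
qed

lemma real_quadratic_disc_decomp:
  assumes "real_quadratic_disc d"
  obtains e P where "odd_prime_set P" "d = e * int (\<Prod>P)"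
    and "e = 1 \<and> \<Prod>P mod 4 = 1 \<or> e = 4 \<and> \<Prod>P mod 4 = 3 \<or> e = 8"
proof -
  obtain e m where "d = e * m" "m > 0" "odd m" "squarefree m"
    and e: "e = 1 \<and> m mod 4 = 1 \<or> e = 4 \<and> m mod 4 = 3 \<or> e = 8"
    using real_quadratic_disc_odd_part[OF assms] .
  moreover obtain P where "odd_prime_set P" "m = int (\<Prod>P)"
    using odd_prime_set_squarefree \<open>squarefree m\<close> \<open>odd m\<close> \<open>m > 0\<close> by metis
  moreover from this have "int (\<Prod>P mod 4) = m mod 4"
    by (simp add: of_nat_mod)
  ultimately show thesis
    using that[of P e] by auto
qed

lemma odd_prod_odd_prime_set:
  assumes "odd_prime_set P"
  shows "odd (\<Prod>P)"
proof
  assume "even (\<Prod>P)"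
  then obtain r where "r \<in> P" "2 dvd r"
    using assms prime_dvd_prod_iff[of P 2 "\<lambda>x. x"] unfolding odd_prime_set_def by auto
  with assms have "r = 2"
    unfolding odd_prime_set_def by (metis two_is_prime_nat primes_dvd_imp_eq)
  with \<open>r \<in> P\<close> assms show False
    unfolding odd_prime_set_def by auto
qed

lemma kron_prime_2: "kron_prime d 2 = chi8 d"
proof (cases "even d")
  case False
  then have "d mod 8 = 1 \<or> d mod 8 = 3 \<or> d mod 8 = 5 \<or> d mod 8 = 7"
    by presburger
  with False show ?thesis
    unfolding kron_prime_def chi8_def by auto
qed (simp add: kron_prime_def chi8_even)

lemma chi4_swap:
  fixes m n :: nat
  assumes "odd m" "odd n"
  shows "(if n mod 4 = 3 then chi4 (int m) else 1) = (if m mod 4 = 3 then chi4 (int n) else 1)"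
proof -
  have "int m mod 4 = 3 \<longleftrightarrow> m mod 4 = 3" "int n mod 4 = 3 \<longleftrightarrow> n mod 4 = 3"
    by presburger+
  with assms show ?thesis
    by (simp add: chi4_odd)
qed

text \<open>For \<open>d = e M\<close>: \<open>chi8\<close> is the supplementary law for \<open>(2/q)\<close>, and \<open>chi4\<close> is the sign
  relating \<open>(M/q)\<close> to \<open>(q/M)\<close> in quadratic reciprocity.\<close>

definition kronecker_2_part :: "int \<Rightarrow> nat \<Rightarrow> int \<Rightarrow> int" where
  "kronecker_2_part e M n = (if e = 8 then chi8 n else 1) * (if M mod 4 = 3 then chi4 n else 1)"

lemma kronecker_2_part_mult:
  "kronecker_2_part e M (a * b) = kronecker_2_part e M a * kronecker_2_part e M b"
  unfolding kronecker_2_part_def by (simp add: chi4_mult chi8_mult)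

lemma kronecker_2_part_1 [simp]: "kronecker_2_part e M 1 = 1"
  unfolding kronecker_2_part_def by simp

lemma kronecker_2_part_cong:
  assumes "e = 1 \<and> M mod 4 = 1 \<or> e = 4 \<and> M mod 4 = 3 \<or> e = 8" "[a = b] (mod e)"
  shows "kronecker_2_part e M a = kronecker_2_part e M b"
proof -
  have "chi8 a = chi8 b" if "e = 8"
    using assms(2) that unfolding cong_def by (metis chi8_mod)
  moreover have "chi4 a = chi4 b" if "e = 4 \<or> e = 8"
  proof -
    from that have "4 dvd e" by auto
    with assms(2) have "a mod 4 = b mod 4"
      unfolding cong_def[symmetric] by (rule cong_dvd_modulus)
    then show ?thesis by (metis chi4_mod)
  qed
  ultimately show ?thesis
    using assms(1) unfolding kronecker_2_part_def by auto
qed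

lemma kron_prime_eq_kronecker_2_part_jacobi:
  assumes P: "odd_prime_set P" and d: "d = e * int (\<Prod>P)"
    and e: "e = 1 \<and> \<Prod>P mod 4 = 1 \<or> e = 4 \<and> \<Prod>P mod 4 = 3 \<or> e = 8"
    and q: "prime q"
  shows "kron_prime d q = kronecker_2_part e (\<Prod>P) (int q) * jacobi P (int q)"
proof (cases "q = 2")
  case True
  show ?thesis
  proof (cases "e = 1")
    case True
    with e \<open>q = 2\<close> show ?thesis
      using d jacobi_2[OF P] by (simp add: kron_prime_2 kronecker_2_part_def)
  next
    case False
    with e d have "even d" "kronecker_2_part e (\<Prod>P) 2 = 0"
      by (auto simp: kronecker_2_part_def chi4_def chi8_def)
    with \<open>q = 2\<close> show ?thesis by (simp add: kron_prime_2 chi8_even)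
  qed
next
  case False
  with q have "q > 2" "odd q"
    using prime_ge_2_nat[of q] prime_odd_nat[of q] by auto
  show ?thesis
  proof (cases "q \<in> P")
    case True
    with P have "int q dvd d"
      unfolding d odd_prime_set_def by (simp add: dvd_prodI)
    with True show ?thesis
      using \<open>q \<noteq> 2\<close> by (simp add: kron_prime_def Legendre_eq_0_iff jacobi_eq_0[OF P])
  next
    case False
    have Legendre_e: "Legendre e (int q) = (if e = 8 then chi8 (int q) else 1)"
      using e Legendre_1[of q] Legendre_4[OF q \<open>q > 2\<close>] Legendre_8[OF q \<open>q > 2\<close>] \<open>q > 2\<close> by auto
    have "(if q mod 4 = 3 then chi4 (int (\<Prod>P)) else 1) = (if \<Prod>P mod 4 = 3 then chi4 (int q) else 1)"
      using odd_prod_odd_prime_set[OF P] \<open>odd q\<close> by (rule chi4_swap)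
    then show ?thesis
      using \<open>q \<noteq> 2\<close> Legendre_e Legendre_prod_reciprocity[OF P q \<open>q > 2\<close> False]
      by (simp add: kron_prime_def d Legendre_mult[OF q \<open>q > 2\<close>] kronecker_2_part_def)
  qed
qed

lemma real_character_kronecker_2_part_jacobi:
  assumes P: "odd_prime_set P" and d: "d = e * int (\<Prod>P)" and "d > 1"
    and e: "e = 1 \<and> \<Prod>P mod 4 = 1 \<or> e = 4 \<and> \<Prod>P mod 4 = 3 \<or> e = 8"
  shows "real_character d (\<lambda>n. kronecker_2_part e (\<Prod>P) n * jacobi P n)"
  unfolding d
proof (rule real_character_twisted_jacobi[OF P])
  have "coprime (2 ^ k) (int (\<Prod>P))" for k :: nat
    using odd_prod_odd_prime_set[OF P]
    by (simp add: coprime_power_left_iff coprime_left_2_iff_odd del: of_nat_prod)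
  from this[of 0] this[of 2] this[of 3] e show "coprime e (int (\<Prod>P))"
    by auto
  show "P \<noteq> {} \<or> (\<exists>a. coprime a e \<and> kronecker_2_part e (\<Prod>P) a = -1)"
  proof (cases "P = {}")
    case True
    with e d \<open>d > 1\<close> have "e = 8" by auto
    have "coprime (3::int) (2 ^ 3)"
      by (simp only: coprime_power_right_iff coprime_right_2_iff_odd) simp
    with \<open>e = 8\<close> \<open>P = {}\<close> have "coprime 3 e \<and> kronecker_2_part e (\<Prod>P) 3 = -1"
      by (simp add: kronecker_2_part_def chi8_def)
    then show ?thesis by blast
  qed simp
qed (use \<open>d > 1\<close> d e in \<open>simp_all add: kronecker_2_part_mult kronecker_2_part_cong\<close>)

theorem kronecker_real_character:
  assumes "real_quadratic_disc d"
  obtains \<chi> where "real_character d \<chi>" and "\<And>n. n \<ge> 0 \<Longrightarrow> kronecker d n = \<chi> n"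
proof -
  obtain e P where P: "odd_prime_set P" and d: "d = e * int (\<Prod>P)"
    and e: "e = 1 \<and> \<Prod>P mod 4 = 1 \<or> e = 4 \<and> \<Prod>P mod 4 = 3 \<or> e = 8"
    using real_quadratic_disc_decomp[OF assms] by blast
  define \<chi> where "\<chi> n = kronecker_2_part e (\<Prod>P) n * jacobi P n" for n
  have "d > 1"
    using assms unfolding real_quadratic_disc_def fundamental_discriminant_def by auto
  then have "real_character d \<chi>"
    unfolding \<chi>_def using P d e by (intro real_character_kronecker_2_part_jacobi)
  moreover have "kronecker d n = \<chi> n" if "n \<ge> 0" for n
  proof (cases "n = 0")
    case True
    then show ?thesis
      using \<open>d > 1\<close> real_character.zero[OF \<open>real_character d \<chi>\<close>] by (simp add: kronecker_def)
  next
    case False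
    with that show ?thesis
      using kron_prime_eq_kronecker_2_part_jacobi[OF P d e] jacobi_mult[OF P] jacobi_1[OF P]
      unfolding \<chi>_def by (intro kronecker_eq_multiplicative) (simp_all add: kronecker_2_part_mult)
  qed
  ultimately show thesis using that by blast
qed

theorem mainTheorem9:
  fixes d p p' :: int and \<beta> :: "int \<Rightarrow> int"
  assumes "real_quadratic_disc d"
    and "prime p" and "odd p" and "\<not> p dvd d"
    and "[p * p' = 1] (mod d)"
    and "\<And>i. \<beta> i = (\<Sum>j\<in>{0<..<(p' * i) mod d}. kronecker d j)"
  shows "rat_cong (\<Sum>i=1..p-1. of_int (\<beta> i) / of_int i)
           (- (1 / of_int d) * of_int (kronecker d p) *
              (\<Sum>c=1..d-1. of_int (kronecker d c) *
                  (bernpoly (nat (p - 1)) (of_int c / of_int d) - bernoulli (nat (p - 1)))))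
           p"
proof -
  obtain \<chi> where "real_character d \<chi>" and kronecker: "\<And>n. n \<ge> 0 \<Longrightarrow> kronecker d n = \<chi> n"
    using kronecker_real_character[OF assms(1)] by blast
  then interpret character_prime_setting d \<chi> p p'
    using assms(2-5)
    by (simp add: character_prime_setting_def character_prime_setting_axioms_def prime_modulus_def)
  have "\<beta> i = beta i" for i
    unfolding assms(6) beta_def partial_sum_def by (simp add: kronecker)
  moreover have "kronecker d c = \<chi> c" if "c \<in> {1..d-1} \<union> {p}" for c
    using that p_ge_3 by (auto intro: kronecker)
  ultimately show ?thesis
    using sum_beta_div_cong unfolding bernoulli_term_def by simp
qed

end
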